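(* Let $\mathsf P_1,\mathsf P_2\subseteq\mathcal G_{s,t}\times\mathbb N$ be parameterized problems with $\mathsf P_1\le_{\mathrm{LOCAL}}$ Multicolored Independent Set and $\mathsf P_2\le_{\mathrm{LOCAL}}$ Multicolored Independent Set. Then $\mathsf P_1\cup\mathsf P_2\le_{\mathrm{LOCAL}}$ Multicolored Independent Set.
   Context: LOCAL model: network = finite connected undirected graph $G$, $n=|V(G)|$, unique $O(\log n)$-bit identifiers; nodes initially know their identifier, neighbours' identifiers, input labels and the parameter; synchronous rounds, unbounded messages to neighbours, arbitrary local computation. $\mathcal G_{s,t}$: finite connected graphs with unary predicates $P_1..P_s$ and binary predicates $E_1..E_t$; a parameterized problem is $\mathsf P\subseteq\mathcal G_{s,t}\times\mathbb N$. LOCAL reductions: a LOCAL algorithm turning $(G,k)$ into $(G',k')$ ($G'$ connected), represented by $\nu:V(G')\to V(G)$ and $\eta$ mapping each $\{x,y\}\in E(G')$ to a path of $G$ between $\nu(x),\nu(y)$ (stored at the nodes; all nodes know $k'$). $\mathsf P\le_{\mathrm{LOCAL}}\mathsf Q$ if for computable $s,r,t,p$ there is such a reduction with $|V(G')|\le|V(G)|^{s(k)}$, all paths of length $\le r(k)$, $\le t(k)$ rounds, $k'\le p(k)$, and $(G,k)\in\mathsf P\iff(G',k')\in\mathsf Q$ (congestion unbounded). Multicolored Independent Set: instance $k\ge1$ and $G\in\mathcal G_{k,1}$ (binary predicate = edge relation), each vertex in at most one of $P_1..P_k$ (vertices may be uncoloured); yes iff there are pairwise non-adjacent $v_1\in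 P_1,..,v_k\in P_k$; parameter $k$. *)

theory Defs
  imports Main
begin

datatype recf = Zero | Succ | Proj nat | Comp recf "recf list" | Prim recf recf | Mn recf

inductive eval_recf :: "recf \<Rightarrow> nat list \<Rightarrow> nat \<Rightarrow> bool" where
  ev_zero: "eval_recf Zero xs 0"
| ev_succ: "eval_recf Succ (x # xs) (Suc x)"
| ev_proj: "i < length xs \<Longrightarrow> eval_recf (Proj i) xs (xs ! i)"
| ev_comp: "list_all2 (\<lambda>g y. eval_recf g xs y) gs ys \<Longrightarrow> eval_recf f ys z
             \<Longrightarrow> eval_recf (Comp f gs) xs z"
| ev_prim0: "eval_recf f xs y \<Longrightarrow> eval_recf (Prim f g) (0 # xs) y"
| ev_primS: "eval_recf (Prim f g) (n # xs) y \<Longrightarrow> eval_recf g (n # y # xs) z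
             \<Longrightarrow> eval_recf (Prim f g) (Suc n # xs) z"
| ev_mn: "eval_recf f (n # xs) 0 \<Longrightarrow> (\<forall>m<n. \<exists>y. eval_recf f (m # xs) y \<and> y \<noteq> 0)
             \<Longrightarrow> eval_recf (Mn f) xs n"

definition computable :: "(nat \<Rightarrow> nat) \<Rightarrow> bool" where
  "computable f \<longleftrightarrow> (\<exists>c. \<forall>n. eval_recf c [n] (f n))"

text \<open>Vertices are natural numbers; the vertex name doubles as the node's unique identifier.
  unary G ! i is the predicate P_{i+1}, binary G ! j is E_{j+1}.\<close>

record lgraph =
  verts  :: "nat set"
  edges  :: "(nat \<times> nat) set"
  unary  :: "nat set list"
  binary :: "(nat \<times> nat) set list"

definition connected_graph :: "nat set \<Rightarrow> (nat \<times> nat) set \<Rightarrow> bool" where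
  "connected_graph V E \<longleftrightarrow> V \<noteq> {} \<and> finite V \<and> E \<subseteq> V \<times> V \<and> sym E \<and> irrefl E
      \<and> (\<forall>u\<in>V. \<forall>w\<in>V. (u, w) \<in> E\<^sup>*)"

definition in_G :: "nat \<Rightarrow> nat \<Rightarrow> lgraph \<Rightarrow> bool" where
  "in_G s t G \<longleftrightarrow> connected_graph (verts G) (edges G)
      \<and> length (unary G) = s \<and> (\<forall>P\<in>set (unary G). P \<subseteq> verts G)
      \<and> length (binary G) = t \<and> (\<forall>B\<in>set (binary G). B \<subseteq> verts G \<times> verts G)"

type_synonym problem = "(lgraph \<times> nat) set"

definition inst_MIS :: "lgraph \<Rightarrow> nat \<Rightarrow> bool" where
  "inst_MIS G k \<longleftrightarrow> k \<ge> 1 \<and> in_G k 1 G \<and> binary G ! 0 = edges G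
      \<and> (\<forall>i<k. \<forall>j<k. i \<noteq> j \<longrightarrow> unary G ! i \<inter> unary G ! j = {})"

definition MIS :: problem where
  "MIS = {(G, k). inst_MIS G k \<and>
      (\<exists>f :: nat \<Rightarrow> nat. (\<forall>i<k. f i \<in> unary G ! i)
         \<and> (\<forall>i<k. \<forall>j<k. i \<noteq> j \<longrightarrow> (f i, f j) \<notin> edges G))}"

definition nbrs :: "lgraph \<Rightarrow> nat \<Rightarrow> nat set" where
  "nbrs G u = {w. (u, w) \<in> edges G}"

text \<open>Initial knowledge of node u: its identifier, its neighbours' identifiers, its input labels
  (unary labels and all binary-predicate tuples it takes part in). The parameter k is common.\<close>
definition init_info :: "lgraph \<Rightarrow> nat \<Rightarrow> nat \<times> nat set \<times> nat set \<times> (nat \<times> nat) set \<times> (nat \<times> nat) set" where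
  "init_info G u = (u, nbrs G u,
      {i. i < length (unary G) \<and> u \<in> unary G ! i},
      {(i, w). i < length (binary G) \<and> (u, w) \<in> binary G ! i},
      {(i, w). i < length (binary G) \<and> (w, u) \<in> binary G ! i})"

definition gball :: "lgraph \<Rightarrow> nat \<Rightarrow> nat \<Rightarrow> nat set" where
  "gball G v r = {u. \<exists>n\<le>r. (v, u) \<in> edges G ^^ n}"

text \<open>Two networks look the same to v for r rounds iff the radius-r balls around v coincide and
  every node in the ball has the same initial knowledge (full-information view).\<close>
definition same_view :: "lgraph \<Rightarrow> lgraph \<Rightarrow> nat \<Rightarrow> nat \<Rightarrow> bool" where
  "same_view G1 G2 v r \<longleftrightarrow> gball G1 v r = gball G2 v r
      \<and> (\<forall>u \<in> gball G1 v r. init_info G1 u = init_info G2 u)"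

text \<open>Output of a node v: the common k', the vertices x of G' with nu(x) = v, their unary labels
  (pairs (x,i): x in P'_{i+1}), the edges (x,y) of G' incident to hosted x together with the
  path eta({x,y}) oriented from nu(x) to nu(y), and binary labels (i,x,y): (x,y) in E'_{i+1}.\<close>
record nodeout =
  out_k   :: nat
  out_ns  :: nat
  out_nt  :: nat
  hosted  :: "nat set"
  ulabs   :: "(nat \<times> nat) set"
  oedges  :: "(nat \<times> nat \<times> nat list) set"
  blabs   :: "(nat \<times> nat \<times> nat) set"

definition gpath :: "lgraph \<Rightarrow> nat list \<Rightarrow> nat \<Rightarrow> nat \<Rightarrow> bool" where
  "gpath G p a b \<longleftrightarrow> p \<noteq> [] \<and> hd p = a \<and> last p = b \<and> distinct p \<and> set p \<subseteq> verts G
      \<and> (\<forall>i < length p - 1. (p ! i, p ! Suc i) \<in> edges G)"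

definition out_root :: "lgraph \<Rightarrow> (nat \<Rightarrow> nodeout) \<Rightarrow> nodeout" where
  "out_root G Out = Out (SOME v. v \<in> verts G)"

definition assemble :: "lgraph \<Rightarrow> (nat \<Rightarrow> nodeout) \<Rightarrow> lgraph" where
  "assemble G Out =
     \<lparr> verts = (\<Union>v\<in>verts G. hosted (Out v)),
       edges = {(x, y). \<exists>v\<in>verts G. \<exists>p. (x, y, p) \<in> oedges (Out v)},
       unary = map (\<lambda>i. {x. \<exists>v\<in>verts G. (x, i) \<in> ulabs (Out v)}) [0..<out_ns (out_root G Out)],
       binary = map (\<lambda>i. {(x, y). \<exists>v\<in>verts G. (i, x, y) \<in> blabs (Out v)}) [0..<out_nt (out_root G Out)] \<rparr>"

definition red_output_ok ::
  "lgraph \<Rightarrow> (nat \<Rightarrow> nodeout) \<Rightarrow> nat \<Rightarrow> nat \<Rightarrow> nat \<Rightarrow> (lgraph \<Rightarrow> nat \<Rightarrow> bool) \<Rightarrow> bool" where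
  "red_output_ok G Out szexp rlen pbound instQ \<longleftrightarrow>
     (let V = verts G; R = out_root G Out; G' = assemble G Out in
       (\<forall>v\<in>V. out_k (Out v) = out_k R \<and> out_ns (Out v) = out_ns R \<and> out_nt (Out v) = out_nt R)
     \<and> (\<forall>v\<in>V. \<forall>w\<in>V. v \<noteq> w \<longrightarrow> hosted (Out v) \<inter> hosted (Out w) = {})
     \<and> (\<forall>v\<in>V. \<forall>(x, i) \<in> ulabs (Out v). x \<in> hosted (Out v) \<and> i < out_ns R)
     \<and> (\<forall>v\<in>V. \<forall>(i, x, y) \<in> blabs (Out v). x \<in> hosted (Out v) \<and> y \<in> verts G' \<and> i < out_nt R)
     \<and> (\<forall>v\<in>V. \<forall>(x, y, p) \<in> oedges (Out v).
           x \<in> hosted (Out v) \<and> length p \<le> Suc rlen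
           \<and> (\<forall>q. (x, y, q) \<in> oedges (Out v) \<longrightarrow> q = p)
           \<and> (\<exists>w\<in>V. y \<in> hosted (Out w) \<and> (y, x, rev p) \<in> oedges (Out w) \<and> gpath G p v w))
     \<and> card (verts G') \<le> card V ^ szexp
     \<and> out_k R \<le> pbound
     \<and> instQ G' (out_k R))"

text \<open>A is the
  algorithm: A G k v is the output of node v on input (G,k); locality in rd(k) rounds means this
  output depends only on v's rd(k)-round view.\<close>
definition local_reduction :: "nat \<Rightarrow> nat \<Rightarrow> problem \<Rightarrow> (lgraph \<Rightarrow> nat \<Rightarrow> bool) \<Rightarrow> problem \<Rightarrow> bool" where
  "local_reduction s t P instQ Q \<longleftrightarrow>
     (\<exists>sz r rd p. computable sz \<and> computable r \<and> computable rd \<and> computable p \<and>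
       (\<exists>A :: lgraph \<Rightarrow> nat \<Rightarrow> nat \<Rightarrow> nodeout.
          (\<forall>G1 G2 k v. in_G s t G1 \<and> in_G s t G2 \<and> v \<in> verts G1 \<and> same_view G1 G2 v (rd k)
               \<longrightarrow> A G1 k v = A G2 k v)
        \<and> (\<forall>G k. in_G s t G \<longrightarrow>
               red_output_ok G (A G k) (sz k) (r k) (p k) instQ
             \<and> ((G, k) \<in> P \<longleftrightarrow> (assemble G (A G k), out_k (out_root G (A G k))) \<in> Q))))"

abbreviation le_LOCAL_MIS :: "nat \<Rightarrow> nat \<Rightarrow> problem \<Rightarrow> bool" where
  "le_LOCAL_MIS s t P \<equiv> local_reduction s t P inst_MIS MIS"

end

theory Submission
  imports Defs "HOL-Library.Nat_Bijection"
begin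

text \<open>Given the two reductions, every node runs both and outputs its share of an OR-composition
  of the two Multicolored Independent Set instances \<open>(G\<^sub>1, k\<^sub>1)\<close> and \<open>(G\<^sub>2, k\<^sub>2)\<close>. The new
  instance has the \<open>k\<^sub>1 k\<^sub>2\<close> colours \<open>(i, j)\<close>; colour \<open>(i, j)\<close> consists of copy \<open>j\<close> of \<open>P\<^sub>i\<close> in a
  blow-up of \<open>G\<^sub>1\<close> by an independent set of size \<open>k\<^sub>2\<close>, together with copy \<open>i\<close> of \<open>P\<^sub>j\<close> in a blow-up
  of \<open>G\<^sub>2\<close> by an independent set of size \<open>k\<^sub>1\<close>, the two blow-ups being non-adjacent. A solution of
  \<open>G\<^sub>1\<close> repeated in every copy, or of \<open>G\<^sub>2\<close> likewise, solves the composed instance. Conversely, a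
  solution of the composed instance either picks, for every \<open>i\<close>, some colour \<open>(i, j)\<close> from the
  first blow-up, which projects to a solution of \<open>G\<^sub>1\<close>, or it picks all colours \<open>(i, j)\<close> of a fixed
  \<open>i\<close> from the second blow-up, which project to a solution of \<open>G\<^sub>2\<close>. An uncoloured hub vertex per
  node of \<open>G\<close>, adjacent to the hubs of the neighbours and to all vertices the node hosts, keeps the
  instance connected. A one-node network is too small for the size bound, so there the single
  node solves both instances itself and outputs a trivial one.\<close>

section \<open>Computable bounds\<close>

definition add_code :: recf where
  "add_code = Prim (Proj 0) (Comp Succ [Proj 1])"

definition mult_code :: recf where
  "mult_code = Prim Zero (Comp add_code [Proj 1, Proj 2])"

lemma eval_add_code: "eval_recf add_code [a, b] (a + b)"
proof (induction a)
  case 0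
  have "eval_recf (Proj 0) [b] ([b] ! 0)" by (rule ev_proj) simp
  then show ?case unfolding add_code_def by (auto intro: ev_prim0)
next
  case (Suc a)
  have "eval_recf (Proj 1) [a, a + b, b] ([a, a + b, b] ! 1)" by (rule ev_proj) simp
  then have "eval_recf (Comp Succ [Proj 1]) [a, a + b, b] (Suc (a + b))"
    by (auto intro!: ev_comp ev_succ)
  with Suc show ?case unfolding add_code_def by (auto intro: ev_primS)
qed

lemma eval_mult_code: "eval_recf mult_code [a, b] (a * b)"
proof (induction a)
  case 0
  then show ?case unfolding mult_code_def by (auto intro: ev_prim0 ev_zero)
next
  case (Suc a)
  have "eval_recf (Proj 1) [a, a * b, b] ([a, a * b, b] ! 1)" by (rule ev_proj) simp
  moreover have "eval_recf (Proj 2) [a, a * b, b] ([a, a * b, b] ! 2)" by (rule ev_proj) simp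
  ultimately have "eval_recf (Comp add_code [Proj 1, Proj 2]) [a, a * b, b] (a * b + b)"
    by (auto intro!: ev_comp eval_add_code)
  with Suc show ?case unfolding mult_code_def by (auto intro: ev_primS simp: add.commute)
qed

lemma computable_binop:
  assumes "computable f" "computable g" and h: "\<And>a b. eval_recf c [a, b] (h a b)"
  shows "computable (\<lambda>n. h (f n) (g n))"
proof -
  obtain cf cg where "\<forall>n. eval_recf cf [n] (f n)" "\<forall>n. eval_recf cg [n] (g n)"
    using assms(1,2) unfolding computable_def by blast
  then have "\<forall>n. eval_recf (Comp c [cf, cg]) [n] (h (f n) (g n))"
    using h by (auto intro!: ev_comp)
  then show ?thesis unfolding computable_def by blast
qed

lemma computable_add: "computable f \<Longrightarrow> computable g \<Longrightarrow> computable (\<lambda>n. f n + g n)"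
  using computable_binop[OF _ _ eval_add_code] .

lemma computable_mult: "computable f \<Longrightarrow> computable g \<Longrightarrow> computable (\<lambda>n. f n * g n)"
  using computable_binop[OF _ _ eval_mult_code] .

lemma computable_Suc: "computable f \<Longrightarrow> computable (\<lambda>n. Suc (f n))"
proof -
  assume "computable f"
  then obtain cf where "\<forall>n. eval_recf cf [n] (f n)" unfolding computable_def by blast
  then have "\<forall>n. eval_recf (Comp Succ [cf]) [n] (Suc (f n))" by (auto intro!: ev_comp ev_succ)
  then show ?thesis unfolding computable_def by blast
qed

section \<open>Views\<close>

lemma same_view_relpow_eq:
  assumes "\<forall>u \<in> gball G1 v r. init_info G1 u = init_info G2 u" and "n \<le> r"
  shows "(v, u) \<in> edges G1 ^^ n \<longleftrightarrow> (v, u) \<in> edges G2 ^^ n"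
  using assms(2)
proof (induction n arbitrary: u)
  case 0 then show ?case by simp
next
  case (Suc n)
  have "nbrs G1 w = nbrs G2 w" if "(v, w) \<in> edges G1 ^^ n" for w
  proof -
    have "w \<in> gball G1 v r" using that Suc.prems unfolding gball_def by (auto intro: Suc_leD)
    then show ?thesis using assms(1) unfolding init_info_def by auto
  qed
  moreover have "(v, u) \<in> edges G ^^ Suc n \<longleftrightarrow> (\<exists>w. (v, w) \<in> edges G ^^ n \<and> u \<in> nbrs G w)"
    for G :: lgraph by (auto simp: nbrs_def)
  ultimately show ?case using Suc by auto
qed

lemma same_view_mono:
  assumes "same_view G1 G2 v r" "m \<le> r"
  shows "same_view G1 G2 v m"
proof -
  have info: "\<forall>u \<in> gball G1 v r. init_info G1 u = init_info G2 u"
    using assms(1) unfolding same_view_def by blast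
  have "gball G1 v m = gball G2 v m"
    using same_view_relpow_eq[OF info] assms(2) unfolding gball_def by (meson order_trans)
  moreover have "gball G1 v m \<subseteq> gball G1 v r"
    using assms(2) unfolding gball_def by (auto intro: order_trans)
  ultimately show ?thesis using info unfolding same_view_def by blast
qed

lemma same_view_nbrs: "same_view G1 G2 v r \<Longrightarrow> nbrs G1 v = nbrs G2 v"
  unfolding same_view_def gball_def init_info_def by fastforce

lemma local_reductionI:
  assumes "computable sz" "computable r" "computable rd" "computable p"
    and "\<And>G1 G2 k v. in_G s t G1 \<Longrightarrow> in_G s t G2 \<Longrightarrow> v \<in> verts G1 \<Longrightarrow>
           same_view G1 G2 v (rd k) \<Longrightarrow> A G1 k v = A G2 k v"
    and "\<And>G k. in_G s t G \<Longrightarrow> red_output_ok G (A G k) (sz k) (r k) (p k) instQ"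
    and "\<And>G k. in_G s t G \<Longrightarrow> (G, k) \<in> P \<longleftrightarrow> (assemble G (A G k), out_k (out_root G (A G k))) \<in> Q"
  shows "local_reduction s t P instQ Q"
  unfolding local_reduction_def using assms by blast

lemma local_reductionE:
  assumes "local_reduction s t P instQ Q"
  obtains sz r rd p A where "computable sz" "computable r" "computable rd" "computable p"
    and "\<And>G1 G2 k v. in_G s t G1 \<Longrightarrow> in_G s t G2 \<Longrightarrow> v \<in> verts G1 \<Longrightarrow>
           same_view G1 G2 v (rd k) \<Longrightarrow> A G1 k v = A G2 k v"
    and "\<And>G k. in_G s t G \<Longrightarrow> red_output_ok G (A G k) (sz k) (r k) (p k) instQ"
    and "\<And>G k. in_G s t G \<Longrightarrow> (G, k) \<in> P \<longleftrightarrow> (assemble G (A G k), out_k (out_root G (A G k))) \<in> Q"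
  using assms unfolding local_reduction_def by blast

lemma red_output_okD:
  assumes ok: "red_output_ok G Ou s r p inst_MIS"
  defines "K \<equiv> out_k (out_root G Ou)"
  shows red_output_ok_out_k: "v \<in> verts G \<Longrightarrow> out_k (Ou v) = K"
    and red_output_ok_hosted_disjoint:
      "v \<in> verts G \<Longrightarrow> w \<in> verts G \<Longrightarrow> v \<noteq> w \<Longrightarrow> hosted (Ou v) \<inter> hosted (Ou w) = {}"
    and red_output_ok_ulabs: "v \<in> verts G \<Longrightarrow> (x, i) \<in> ulabs (Ou v) \<Longrightarrow> x \<in> hosted (Ou v) \<and> i < K"
    and red_output_ok_oedges: "v \<in> verts G \<Longrightarrow> (x, y, q) \<in> oedges (Ou v) \<Longrightarrow>
       x \<in> hosted (Ou v) \<and> length q \<le> Suc r \<and> (\<forall>q'. (x, y, q') \<in> oedges (Ou v) \<longrightarrow> q' = q)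
       \<and> (\<exists>w\<in>verts G. y \<in> hosted (Ou w) \<and> (y, x, rev q) \<in> oedges (Ou w) \<and> gpath G q v w)"
    and red_output_ok_card: "card (verts (assemble G Ou)) \<le> card (verts G) ^ s"
    and red_output_ok_bound: "K \<le> p"
    and red_output_ok_inst: "inst_MIS (assemble G Ou) K"
proof -
  note ok' = ok[unfolded red_output_ok_def Let_def]
  show "out_k (Ou v) = K" if "v \<in> verts G" using ok' that unfolding K_def by simp
  show "hosted (Ou v) \<inter> hosted (Ou w) = {}" if "v \<in> verts G" "w \<in> verts G" "v \<noteq> w"
    using ok' that by simp
  show "card (verts (assemble G Ou)) \<le> card (verts G) ^ s" "K \<le> p"
    and inst: "inst_MIS (assemble G Ou) K"
    using ok' unfolding K_def by simp_all
  have "out_ns (out_root G Ou) = K"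
    using inst by (simp add: inst_MIS_def in_G_def assemble_def)
  moreover have "\<forall>v\<in>verts G. \<forall>(x, i) \<in> ulabs (Ou v). x \<in> hosted (Ou v) \<and> i < out_ns (out_root G Ou)"
    using ok' by simp
  ultimately show "x \<in> hosted (Ou v) \<and> i < K" if "v \<in> verts G" "(x, i) \<in> ulabs (Ou v)"
    using that by auto
  have "\<forall>v\<in>verts G. \<forall>(x, y, q) \<in> oedges (Ou v). x \<in> hosted (Ou v) \<and> length q \<le> Suc r
       \<and> (\<forall>q'. (x, y, q') \<in> oedges (Ou v) \<longrightarrow> q' = q)
       \<and> (\<exists>w\<in>verts G. y \<in> hosted (Ou w) \<and> (y, x, rev q) \<in> oedges (Ou w) \<and> gpath G q v w)"
    using ok' by simp
  then show "x \<in> hosted (Ou v) \<and> length q \<le> Suc r \<and> (\<forall>q'. (x, y, q') \<in> oedges (Ou v) \<longrightarrow> q' = q)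
       \<and> (\<exists>w\<in>verts G. y \<in> hosted (Ou w) \<and> (y, x, rev q) \<in> oedges (Ou w) \<and> gpath G q v w)"
    if "v \<in> verts G" "(x, y, q) \<in> oedges (Ou v)" using that by fastforce
qed

lemma verts_assemble: "verts (assemble G Ou) = (\<Union>v\<in>verts G. hosted (Ou v))"
  by (simp add: assemble_def)
lemma edges_assemble: "edges (assemble G Ou) = {(x, y). \<exists>v\<in>verts G. \<exists>p. (x, y, p) \<in> oedges (Ou v)}"
  by (simp add: assemble_def)
lemma length_unary_assemble: "length (unary (assemble G Ou)) = out_ns (out_root G Ou)"
  by (simp add: assemble_def)
lemma unary_assemble: "i < out_ns (out_root G Ou) \<Longrightarrow>
    unary (assemble G Ou) ! i = {x. \<exists>v\<in>verts G. (x, i) \<in> ulabs (Ou v)}"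
  by (simp add: assemble_def)
lemma binary_assemble: "binary (assemble G Ou) =
    map (\<lambda>i. {(x, y). \<exists>v\<in>verts G. (i, x, y) \<in> blabs (Ou v)}) [0..<out_nt (out_root G Ou)]"
  by (simp add: assemble_def)

lemma ex_out_root_eq: "verts G \<noteq> {} \<Longrightarrow> \<exists>v\<in>verts G. out_root G Ou = Ou v"
  unfolding out_root_def by (metis some_in_eq)

lemma out_root_cong:
  "verts G \<noteq> {} \<Longrightarrow> \<forall>v\<in>verts G. Ou v = Ou' v \<Longrightarrow> out_root G Ou = out_root G Ou'"
  unfolding out_root_def by (metis some_in_eq)

lemma assemble_cong:
  "verts G \<noteq> {} \<Longrightarrow> \<forall>v\<in>verts G. Ou v = Ou' v \<Longrightarrow> assemble G Ou = assemble G Ou'"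
  using out_root_cong[of G Ou Ou'] unfolding assemble_def by auto

lemma red_output_ok_cong:
  "verts G \<noteq> {} \<Longrightarrow> \<forall>v\<in>verts G. Ou v = Ou' v \<Longrightarrow>
    red_output_ok G Ou sz r p Q \<longleftrightarrow> red_output_ok G Ou' sz r p Q"
  unfolding red_output_ok_def Let_def
  using out_root_cong[of G Ou Ou'] assemble_cong[of G Ou Ou'] by (simp cong: ball_cong bex_cong)

lemma connected_graph_isolated:
  assumes "connected_graph (verts G) (edges G)" "v \<in> verts G" "nbrs G v = {}"
  shows "verts G = {v}"
proof -
  have "w = v" if w: "w \<in> verts G" for w
  proof -
    have "(v, w) \<in> (edges G)\<^sup>*" using assms(1,2) w unfolding connected_graph_def by blast
    then show ?thesis
      by (cases rule: converse_rtranclE) (use assms(3) in \<open>auto simp: nbrs_def\<close>)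
  qed
  then show ?thesis using assms(2) by blast
qed

lemma sum_le_power:
  fixes n A B k1 k2 p1 p2 s1 s2 :: nat
  assumes n: "2 \<le> n" and A: "A \<le> n ^ s1" and B: "B \<le> n ^ s2" and k1: "k1 \<le> p1" and k2: "k2 \<le> p2"
  shows "n + A * k2 + B * k1 \<le> n ^ (Suc (Suc (s1 + s2 + p1 + p2)))"
proof -
  let ?S = "s1 + s2 + 1"
  have n1: "1 \<le> n" using n by simp
  have a: "n \<le> n ^ ?S" using n1 by (metis le_add2 power_increasing power_one_right)
  have b: "A \<le> n ^ ?S" using A power_increasing[OF _ n1, of s1 ?S] by simp
  have c: "B \<le> n ^ ?S" using B power_increasing[OF _ n1, of s2 ?S] by simp
  have "n + A * k2 + B * k1 \<le> n ^ ?S + n ^ ?S * p2 + n ^ ?S * p1"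
    using a b c k1 k2 by (intro add_mono mult_mono) auto
  also have "\<dots> = n ^ ?S * (1 + p1 + p2)" by (simp add: algebra_simps)
  also have "\<dots> \<le> n ^ ?S * n ^ (1 + p1 + p2)"
  proof -
    have "1 + p1 + p2 < 2 ^ (1 + p1 + p2)" by (rule less_exp)
    also have "\<dots> \<le> n ^ (1 + p1 + p2)" using n by (rule power_mono) simp
    finally have "1 + p1 + p2 \<le> n ^ (1 + p1 + p2)" by simp
    then show ?thesis by (rule mult_le_mono2)
  qed
  also have "\<dots> = n ^ (Suc (Suc (s1 + s2 + p1 + p2)))" by (simp add: power_add[symmetric] add.assoc)
  finally show ?thesis .
qed

lemma pair_index_less:
  fixes i j a b :: nat
  shows "i < a \<Longrightarrow> j < b \<Longrightarrow> i * b + j < a * b"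
proof -
  assume "i < a" "j < b"
  then have "Suc i * b \<le> a * b" by (intro mult_le_mono1) simp
  with \<open>j < b\<close> show ?thesis by simp
qed

lemma pair_index_inj:
  fixes i i' j j' b :: nat
  assumes "j < b" "j' < b" "i * b + j = i' * b + j'"
  shows "i = i' \<and> j = j'"
proof -
  have "(i * b + j) div b = i" "(i * b + j) mod b = j"
    "(i' * b + j') div b = i'" "(i' * b + j') mod b = j'"
    using assms(1,2) by simp_all
  then show ?thesis using assms(3) by metis
qed

lemma pair_index_split:
  fixes a b c :: nat
  assumes "c < a * b"
  shows "c div b < a \<and> c mod b < b \<and> c = c div b * b + c mod b"
proof -
  have "0 < b" using assms by (cases b) auto
  then show ?thesis using assms by (simp add: less_mult_imp_div_less)
qed

section \<open>The OR-composition of two instances\<close>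

text \<open>The vertices of the composed instance are natural numbers: the hub of node \<open>v\<close>, and the
  \<open>j\<close>-th copy of vertex \<open>x\<close> of the first (\<open>copy1\<close>) or the second (\<open>copy2\<close>) instance, told apart
  by their residue modulo 3.\<close>

definition hub :: "nat \<Rightarrow> nat" where "hub v = 3 * v"
definition copy1 :: "nat \<Rightarrow> nat \<Rightarrow> nat" where "copy1 x j = 3 * prod_encode (x, j) + 1"
definition copy2 :: "nat \<Rightarrow> nat \<Rightarrow> nat" where "copy2 x j = 3 * prod_encode (x, j) + 2"

lemma vertex_code_eq_iff[simp]:
  "hub v = hub w \<longleftrightarrow> v = w"
  "copy1 x j = copy1 y j' \<longleftrightarrow> x = y \<and> j = j'"
  "copy2 x j = copy2 y j' \<longleftrightarrow> x = y \<and> j = j'"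
  "hub v \<noteq> copy1 x j" "copy1 x j \<noteq> hub v"
  "hub v \<noteq> copy2 x j" "copy2 x j \<noteq> hub v"
  "copy1 y i \<noteq> copy2 x j" "copy2 x j \<noteq> copy1 y i"
proof -
  have "3 * a \<noteq> 3 * b + 1" "3 * a \<noteq> 3 * b + 2" "3 * a + 1 \<noteq> 3 * b + 2" for a b :: nat
    by presburger+
  then show "hub v = hub w \<longleftrightarrow> v = w" "copy1 x j = copy1 y j' \<longleftrightarrow> x = y \<and> j = j'"
    "copy2 x j = copy2 y j' \<longleftrightarrow> x = y \<and> j = j'"
    "hub v \<noteq> copy1 x j" "copy1 x j \<noteq> hub v" "hub v \<noteq> copy2 x j" "copy2 x j \<noteq> hub v"
    "copy1 y i \<noteq> copy2 x j" "copy2 x j \<noteq> copy1 y i"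
    unfolding hub_def copy1_def copy2_def by (simp_all, metis+)
qed

definition copy_orig :: "nat \<Rightarrow> nat" where
  "copy_orig z = fst (prod_decode (z div 3))"

lemma copy_orig_simps[simp]: "copy_orig (copy1 x j) = x" "copy_orig (copy2 x j) = x"
proof -
  have "(3 * a + 1) div 3 = a" "(3 * a + 2) div 3 = a" for a :: nat by presburger+
  then show "copy_orig (copy1 x j) = x" "copy_orig (copy2 x j) = x"
    unfolding copy_orig_def copy1_def copy2_def by simp_all
qed

lemma vertex_kind_cases:
  fixes z :: nat
  obtains v where "z = hub v" | x j where "z = copy1 x j" | x j where "z = copy2 x j"
proof -
  obtain a b where ab: "prod_decode (z div 3) = (a, b)" by (cases "prod_decode (z div 3)")
  have pe: "prod_encode (a, b) = z div 3" using ab by (metis prod_decode_inverse)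
  have "z mod 3 = 0 \<or> z mod 3 = 1 \<or> z mod 3 = 2" by presburger
  moreover have "z = 3 * (z div 3) + z mod 3" by presburger
  ultimately consider "z = 3 * (z div 3)" | "z = 3 * (z div 3) + 1" | "z = 3 * (z div 3) + 2"
    by force
  then show ?thesis
  proof cases
    case 1 then show ?thesis using that(1) unfolding hub_def by blast
  next
    case 2 then show ?thesis using that(2) pe unfolding copy1_def by metis
  next
    case 3 then show ?thesis using that(3) pe unfolding copy2_def by metis
  qed
qed

definition or_hosted :: "nodeout \<Rightarrow> nodeout \<Rightarrow> nat \<Rightarrow> nat set" where
  "or_hosted O1 O2 v = {hub v} \<union> {copy1 x j | x j. x \<in> hosted O1 \<and> j < out_k O2}
                      \<union> {copy2 y i | y i. y \<in> hosted O2 \<and> i < out_k O1}"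

definition or_oedges :: "nodeout \<Rightarrow> nodeout \<Rightarrow> nat \<Rightarrow> nat set \<Rightarrow> (nat \<times> nat \<times> nat list) set" where
  "or_oedges O1 O2 v N =
     {(copy1 x j, copy1 y j', p) | x y p j j'. (x, y, p) \<in> oedges O1 \<and> j < out_k O2 \<and> j' < out_k O2}
   \<union> {(copy2 x i, copy2 y i', p) | x y p i i'. (x, y, p) \<in> oedges O2 \<and> i < out_k O1 \<and> i' < out_k O1}
   \<union> {(hub v, hub w, [v, w]) | w. w \<in> N}
   \<union> {(hub v, h, [v]) | h. h \<in> or_hosted O1 O2 v - {hub v}}
   \<union> {(h, hub v, [v]) | h. h \<in> or_hosted O1 O2 v - {hub v}}"

definition or_ulabs :: "nodeout \<Rightarrow> nodeout \<Rightarrow> (nat \<times> nat) set" where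
  "or_ulabs O1 O2 =
     {(copy1 x j, i * out_k O2 + j) | x i j. (x, i) \<in> ulabs O1 \<and> j < out_k O2}
   \<union> {(copy2 y i, i * out_k O2 + j) | y i j. (y, j) \<in> ulabs O2 \<and> i < out_k O1}"

definition or_output :: "nodeout \<Rightarrow> nodeout \<Rightarrow> nat \<Rightarrow> nat set \<Rightarrow> nodeout" where
  "or_output O1 O2 v N = \<lparr> out_k = out_k O1 * out_k O2, out_ns = out_k O1 * out_k O2, out_nt = 1,
      hosted = or_hosted O1 O2 v, ulabs = or_ulabs O1 O2, oedges = or_oedges O1 O2 v N,
      blabs = {(0, x, y) | x y p. (x, y, p) \<in> or_oedges O1 O2 v N} \<rparr>"

locale or_composition =
  fixes G :: lgraph and O1 O2 :: "nat \<Rightarrow> nodeout" and s1 r1 p1 s2 r2 p2 :: nat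
  assumes ok1: "red_output_ok G O1 s1 r1 p1 inst_MIS"
  and ok2: "red_output_ok G O2 s2 r2 p2 inst_MIS"
  and G_connected: "connected_graph (verts G) (edges G)"
  and no_isolated: "\<forall>v\<in>verts G. nbrs G v \<noteq> {}"
begin

definition "k1 = out_k (out_root G O1)"
definition "k2 = out_k (out_root G O2)"
definition "G1 = assemble G O1"
definition "G2 = assemble G O2"
definition "Out v = or_output (O1 v) (O2 v) v (nbrs G v)"
definition "G' = assemble G Out"

lemma verts_G_nonempty: "verts G \<noteq> {}" using G_connected unfolding connected_graph_def by blast

lemma inst1: "inst_MIS G1 k1" using red_output_ok_inst[OF ok1] unfolding G1_def k1_def .
lemma inst2: "inst_MIS G2 k2" using red_output_ok_inst[OF ok2] unfolding G2_def k2_def .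
lemma k1_pos: "1 \<le> k1" using inst1 unfolding inst_MIS_def by blast
lemma k2_pos: "1 \<le> k2" using inst2 unfolding inst_MIS_def by blast

lemma out_k_O1[simp]: "v \<in> verts G \<Longrightarrow> out_k (O1 v) = k1"
  using red_output_ok_out_k[OF ok1] unfolding k1_def .
lemma out_k_O2[simp]: "v \<in> verts G \<Longrightarrow> out_k (O2 v) = k2"
  using red_output_ok_out_k[OF ok2] unfolding k2_def .

lemma hosted_Out: "v \<in> verts G \<Longrightarrow>
    hosted (Out v) = {hub v} \<union> {copy1 x j | x j. x \<in> hosted (O1 v) \<and> j < k2}
                     \<union> {copy2 y i | y i. y \<in> hosted (O2 v) \<and> i < k1}"
  by (simp add: Out_def or_output_def or_hosted_def)

lemma hosted_Out_iff[simp]: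
  "v \<in> verts G \<Longrightarrow> hub w \<in> hosted (Out v) \<longleftrightarrow> w = v"
  "v \<in> verts G \<Longrightarrow> copy1 x j \<in> hosted (Out v) \<longleftrightarrow> x \<in> hosted (O1 v) \<and> j < k2"
  "v \<in> verts G \<Longrightarrow> copy2 x j \<in> hosted (Out v) \<longleftrightarrow> x \<in> hosted (O2 v) \<and> j < k1"
  by (auto simp: hosted_Out)

lemma hosted_cases:
  assumes "v \<in> verts G" "z \<in> hosted (Out v)"
  obtains "z = hub v" | x j where "z = copy1 x j" "x \<in> hosted (O1 v)" "j < k2"
    | x i where "z = copy2 x i" "x \<in> hosted (O2 v)" "i < k1"
  using assms by (auto simp: hosted_Out)

lemma oedges_Out: "v \<in> verts G \<Longrightarrow> oedges (Out v) =
     {(copy1 x j, copy1 y j', p) | x y p j j'. (x, y, p) \<in> oedges (O1 v) \<and> j < k2 \<and> j' < k2}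
   \<union> {(copy2 x i, copy2 y i', p) | x y p i i'. (x, y, p) \<in> oedges (O2 v) \<and> i < k1 \<and> i' < k1}
   \<union> {(hub v, hub w, [v, w]) | w. w \<in> nbrs G v}
   \<union> {(hub v, h, [v]) | h. h \<in> hosted (Out v) - {hub v}}
   \<union> {(h, hub v, [v]) | h. h \<in> hosted (Out v) - {hub v}}"
  by (simp add: Out_def or_output_def or_oedges_def or_hosted_def)

lemma oedges_Out_iff[simp]:
  "v \<in> verts G \<Longrightarrow> (copy1 x j, copy1 y j', p) \<in> oedges (Out v) \<longleftrightarrow> (x, y, p) \<in> oedges (O1 v) \<and> j < k2 \<and> j' < k2"
  "v \<in> verts G \<Longrightarrow> (copy2 x j, copy2 y j', p) \<in> oedges (Out v) \<longleftrightarrow> (x, y, p) \<in> oedges (O2 v) \<and> j < k1 \<and> j' < k1"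
  "v \<in> verts G \<Longrightarrow> (copy1 x j, copy2 y j', p) \<notin> oedges (Out v)"
  "v \<in> verts G \<Longrightarrow> (copy2 x j, copy1 y j', p) \<notin> oedges (Out v)"
  "v \<in> verts G \<Longrightarrow> (hub u, hub w, p) \<in> oedges (Out v) \<longleftrightarrow> u = v \<and> w \<in> nbrs G v \<and> p = [v, w]"
  "v \<in> verts G \<Longrightarrow> (hub u, copy1 x j, p) \<in> oedges (Out v) \<longleftrightarrow> u = v \<and> p = [v] \<and> x \<in> hosted (O1 v) \<and> j < k2"
  "v \<in> verts G \<Longrightarrow> (hub u, copy2 x j, p) \<in> oedges (Out v) \<longleftrightarrow> u = v \<and> p = [v] \<and> x \<in> hosted (O2 v) \<and> j < k1"
  "v \<in> verts G \<Longrightarrow> (copy1 x j, hub u, p) \<in> oedges (Out v) \<longleftrightarrow> u = v \<and> p = [v] \<and> x \<in> hosted (O1 v) \<and> j < k2"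
  "v \<in> verts G \<Longrightarrow> (copy2 x j, hub u, p) \<in> oedges (Out v) \<longleftrightarrow> u = v \<and> p = [v] \<and> x \<in> hosted (O2 v) \<and> j < k1"
  by (auto simp: oedges_Out)

lemma out_ns_root1: "out_ns (out_root G O1) = k1"
  using inst1 length_unary_assemble[of G O1] unfolding G1_def inst_MIS_def in_G_def by simp
lemma out_ns_root2: "out_ns (out_root G O2) = k2"
  using inst2 length_unary_assemble[of G O2] unfolding G2_def inst_MIS_def in_G_def by simp

lemma unary_G1: "i < k1 \<Longrightarrow> x \<in> unary G1 ! i \<longleftrightarrow> (\<exists>v\<in>verts G. (x, i) \<in> ulabs (O1 v))"
  using unary_assemble[of i G O1] out_ns_root1 unfolding G1_def by simp
lemma unary_G2: "i < k2 \<Longrightarrow> x \<in> unary G2 ! i \<longleftrightarrow> (\<exists>v\<in>verts G. (x, i) \<in> ulabs (O2 v))"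
  using unary_assemble[of i G O2] out_ns_root2 unfolding G2_def by simp

lemma ulabs_O1: "v \<in> verts G \<Longrightarrow> (x, i) \<in> ulabs (O1 v) \<Longrightarrow> x \<in> hosted (O1 v) \<and> i < k1"
  using red_output_ok_ulabs[OF ok1] unfolding k1_def by blast
lemma ulabs_O2: "v \<in> verts G \<Longrightarrow> (x, i) \<in> ulabs (O2 v) \<Longrightarrow> x \<in> hosted (O2 v) \<and> i < k2"
  using red_output_ok_ulabs[OF ok2] unfolding k2_def by blast

lemma root_Out: "out_k (out_root G Out) = k1 * k2" "out_ns (out_root G Out) = k1 * k2"
   "out_nt (out_root G Out) = 1"
  using ex_out_root_eq[OF verts_G_nonempty, of Out] by (auto simp: Out_def or_output_def)

lemma verts_G1: "x \<in> verts G1 \<longleftrightarrow> (\<exists>v\<in>verts G. x \<in> hosted (O1 v))"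
  by (simp add: G1_def verts_assemble)
lemma verts_G2: "x \<in> verts G2 \<longleftrightarrow> (\<exists>v\<in>verts G. x \<in> hosted (O2 v))"
  by (simp add: G2_def verts_assemble)
lemma edges_G1: "(x, y) \<in> edges G1 \<longleftrightarrow> (\<exists>v\<in>verts G. \<exists>p. (x, y, p) \<in> oedges (O1 v))"
  by (simp add: G1_def edges_assemble)
lemma edges_G2: "(x, y) \<in> edges G2 \<longleftrightarrow> (\<exists>v\<in>verts G. \<exists>p. (x, y, p) \<in> oedges (O2 v))"
  by (simp add: G2_def edges_assemble)

lemma verts_G'[simp]:
  "hub w \<in> verts G' \<longleftrightarrow> w \<in> verts G"
  "copy1 x j \<in> verts G' \<longleftrightarrow> x \<in> verts G1 \<and> j < k2"
  "copy2 x j \<in> verts G' \<longleftrightarrow> x \<in> verts G2 \<and> j < k1"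
  by (auto simp: G'_def verts_assemble verts_G1 verts_G2)

lemma edges_G'[simp]:
  "(copy1 x j, copy1 y j') \<in> edges G' \<longleftrightarrow> (x, y) \<in> edges G1 \<and> j < k2 \<and> j' < k2"
  "(copy2 x j, copy2 y j') \<in> edges G' \<longleftrightarrow> (x, y) \<in> edges G2 \<and> j < k1 \<and> j' < k1"
  "(copy1 x j, copy2 y j') \<notin> edges G'"
  "(copy2 x j, copy1 y j') \<notin> edges G'"
  "(hub u, hub w) \<in> edges G' \<longleftrightarrow> u \<in> verts G \<and> (u, w) \<in> edges G"
  "(hub u, copy1 x j) \<in> edges G' \<longleftrightarrow> u \<in> verts G \<and> x \<in> hosted (O1 u) \<and> j < k2"
  "(hub u, copy2 x j) \<in> edges G' \<longleftrightarrow> u \<in> verts G \<and> x \<in> hosted (O2 u) \<and> j < k1"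
  "(copy1 x j, hub u) \<in> edges G' \<longleftrightarrow> u \<in> verts G \<and> x \<in> hosted (O1 u) \<and> j < k2"
  "(copy2 x j, hub u) \<in> edges G' \<longleftrightarrow> u \<in> verts G \<and> x \<in> hosted (O2 u) \<and> j < k1"
  by (auto simp: G'_def edges_assemble edges_G1 edges_G2 nbrs_def)

lemma ulabs_Out: "v \<in> verts G \<Longrightarrow> ulabs (Out v) =
     {(copy1 x j, i * k2 + j) | x i j. (x, i) \<in> ulabs (O1 v) \<and> j < k2}
   \<union> {(copy2 y i, i * k2 + j) | y i j. (y, j) \<in> ulabs (O2 v) \<and> i < k1}"
  by (simp add: Out_def or_output_def or_ulabs_def)

lemma unary_G':
  assumes c: "c < k1 * k2"
  shows "hub w \<notin> unary G' ! c"
    "copy1 x j \<in> unary G' ! c \<longleftrightarrow> j < k2 \<and> (\<exists>i<k1. c = i * k2 + j \<and> x \<in> unary G1 ! i)"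
    "copy2 x i \<in> unary G' ! c \<longleftrightarrow> i < k1 \<and> (\<exists>j<k2. c = i * k2 + j \<and> x \<in> unary G2 ! j)"
proof -
  have U: "z \<in> unary G' ! c \<longleftrightarrow> (\<exists>v\<in>verts G. (z, c) \<in> ulabs (Out v))" for z
    using unary_assemble[of c G Out] root_Out c unfolding G'_def by simp
  show "hub w \<notin> unary G' ! c" unfolding U by (auto simp: ulabs_Out)
  show "copy1 x j \<in> unary G' ! c \<longleftrightarrow> j < k2 \<and> (\<exists>i<k1. c = i * k2 + j \<and> x \<in> unary G1 ! i)"
    unfolding U using ulabs_O1 by (auto simp: ulabs_Out unary_G1)
  show "copy2 x i \<in> unary G' ! c \<longleftrightarrow> i < k1 \<and> (\<exists>j<k2. c = i * k2 + j \<and> x \<in> unary G2 ! j)"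
    unfolding U using ulabs_O2 by (auto simp: ulabs_Out unary_G2)
qed

lemma G_graph: "finite (verts G)" "edges G \<subseteq> verts G \<times> verts G" "sym (edges G)" "irrefl (edges G)"
  "\<forall>u\<in>verts G. \<forall>w\<in>verts G. (u, w) \<in> (edges G)\<^sup>*"
  using G_connected unfolding connected_graph_def by auto

lemma G1_graph: "finite (verts G1)" "irrefl (edges G1)"
  using inst1 unfolding inst_MIS_def in_G_def connected_graph_def by auto
lemma G2_graph: "finite (verts G2)" "irrefl (edges G2)"
  using inst2 unfolding inst_MIS_def in_G_def connected_graph_def by auto

lemma out_counts_Out: "v \<in> verts G \<Longrightarrow>
    out_k (Out v) = k1 * k2 \<and> out_ns (Out v) = k1 * k2 \<and> out_nt (Out v) = 1"
  by (simp add: Out_def or_output_def)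

lemma hosted_Out_disjoint:
  "v \<in> verts G \<Longrightarrow> w \<in> verts G \<Longrightarrow> v \<noteq> w \<Longrightarrow> hosted (Out v) \<inter> hosted (Out w) = {}"
proof (rule ccontr)
  assume a: "v \<in> verts G" "w \<in> verts G" "v \<noteq> w" "hosted (Out v) \<inter> hosted (Out w) \<noteq> {}"
  then obtain z where z: "z \<in> hosted (Out v)" "z \<in> hosted (Out w)" by blast
  have d1: "hosted (O1 v) \<inter> hosted (O1 w) = {}"
    using red_output_ok_hosted_disjoint[OF ok1] a by blast
  have d2: "hosted (O2 v) \<inter> hosted (O2 w) = {}"
    using red_output_ok_hosted_disjoint[OF ok2] a by blast
  show False
    by (rule vertex_kind_cases[of z]) (use z a d1 d2 in auto)
qed

lemma ulabs_Out_ok: "v \<in> verts G \<Longrightarrow> (z, c) \<in> ulabs (Out v) \<Longrightarrow> z \<in> hosted (Out v) \<and> c < k1 * k2"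
  using ulabs_O1 ulabs_O2 by (fastforce simp: ulabs_Out intro: pair_index_less)

lemma oedges_Out_cases:
  assumes "v \<in> verts G" "(a, b, p) \<in> oedges (Out v)"
  obtains (in_copy1) x y j j' where "a = copy1 x j" "b = copy1 y j'"
      "(x, y, p) \<in> oedges (O1 v)" "j < k2" "j' < k2"
    | (in_copy2) x y j j' where "a = copy2 x j" "b = copy2 y j'"
      "(x, y, p) \<in> oedges (O2 v)" "j < k1" "j' < k1"
    | (hub_hub) w where "a = hub v" "b = hub w" "p = [v, w]" "w \<in> nbrs G v"
    | (hub_out) "a = hub v" "b \<in> hosted (Out v)" "b \<noteq> hub v" "p = [v]"
    | (hub_in) "b = hub v" "a \<in> hosted (Out v)" "a \<noteq> hub v" "p = [v]"
  using assms(2) unfolding oedges_Out[OF assms(1)] by blast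

lemma oedges_Out_ok:
  assumes v: "v \<in> verts G" and e: "(a, b, p) \<in> oedges (Out v)"
  shows "a \<in> hosted (Out v) \<and> length p \<le> Suc (Suc (r1 + r2))
           \<and> (\<forall>q. (a, b, q) \<in> oedges (Out v) \<longrightarrow> q = p)
           \<and> (\<exists>w\<in>verts G. b \<in> hosted (Out w) \<and> (b, a, rev p) \<in> oedges (Out w) \<and> gpath G p v w)"
  using v e
proof (cases rule: oedges_Out_cases)
  case (in_copy1 x y j j')
  from red_output_ok_oedges[OF ok1 v in_copy1(3)] obtain w where
    "x \<in> hosted (O1 v)" "length p \<le> Suc r1" "\<forall>q'. (x, y, q') \<in> oedges (O1 v) \<longrightarrow> q' = p"
    "w \<in> verts G" "y \<in> hosted (O1 w)" "(y, x, rev p) \<in> oedges (O1 w)" "gpath G p v w" by blast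
  note orig = this
  have unique: "\<forall>q. (a, b, q) \<in> oedges (Out v) \<longrightarrow> q = p" using orig(3) in_copy1(1,2) v by simp
  have reverse: "b \<in> hosted (Out w) \<and> (b, a, rev p) \<in> oedges (Out w) \<and> gpath G p v w"
    using orig(4-7) in_copy1 by simp
  show ?thesis using unique orig(1,2,4) reverse in_copy1(1,4) v by auto
next
  case (in_copy2 x y j j')
  from red_output_ok_oedges[OF ok2 v in_copy2(3)] obtain w where
    "x \<in> hosted (O2 v)" "length p \<le> Suc r2" "\<forall>q'. (x, y, q') \<in> oedges (O2 v) \<longrightarrow> q' = p"
    "w \<in> verts G" "y \<in> hosted (O2 w)" "(y, x, rev p) \<in> oedges (O2 w)" "gpath G p v w" by blast
  note orig = this
  have unique: "\<forall>q. (a, b, q) \<in> oedges (Out v) \<longrightarrow> q = p" using orig(3) in_copy2(1,2) v by simp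
  have reverse: "b \<in> hosted (Out w) \<and> (b, a, rev p) \<in> oedges (Out w) \<and> gpath G p v w"
    using orig(4-7) in_copy2 by simp
  show ?thesis using unique orig(1,2,4) reverse in_copy2(1,4) v by auto
next
  case (hub_hub w)
  have vw: "(v, w) \<in> edges G" using hub_hub(4) unfolding nbrs_def by simp
  then have w: "w \<in> verts G" and wv: "(w, v) \<in> edges G" and ne: "v \<noteq> w"
    using G_graph(2,3,4) unfolding sym_def irrefl_def by auto
  have path: "gpath G [v, w] v w" using v w vw ne unfolding gpath_def by (auto simp: less_Suc_eq)
  show ?thesis using hub_hub v w wv path by (auto simp: nbrs_def)
next
  case hub_out
  have unique: "(hub v, b, q) \<in> oedges (Out v) \<Longrightarrow> q = [v]" for q
    by (rule vertex_kind_cases[of b]) (use hub_out v in auto)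
  have reverse: "(b, hub v, [v]) \<in> oedges (Out v)" using hub_out oedges_Out[OF v] by simp
  have path: "gpath G [v] v v" using v unfolding gpath_def by simp
  show ?thesis using hub_out unique reverse path v by auto
next
  case hub_in
  have unique: "(a, hub v, q) \<in> oedges (Out v) \<Longrightarrow> q = [v]" for q
    by (rule vertex_kind_cases[of a]) (use hub_in v in auto)
  have reverse: "(hub v, a, [v]) \<in> oedges (Out v)" using hub_in oedges_Out[OF v] by simp
  have path: "gpath G [v] v v" using v unfolding gpath_def by simp
  show ?thesis using hub_in unique reverse path v by auto
qed

lemma edges_G'_iff: "(a, b) \<in> edges G' \<longleftrightarrow> (\<exists>v\<in>verts G. \<exists>p. (a, b, p) \<in> oedges (Out v))"
  by (simp add: G'_def edges_assemble)
lemma verts_G'_iff: "z \<in> verts G' \<longleftrightarrow> (\<exists>v\<in>verts G. z \<in> hosted (Out v))"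
  by (simp add: G'_def verts_assemble)

lemma sym_G': "sym (edges G')"
proof (rule symI)
  fix a b assume "(a, b) \<in> edges G'"
  then obtain v p where "v \<in> verts G" "(a, b, p) \<in> oedges (Out v)" unfolding edges_G'_iff by blast
  from oedges_Out_ok[OF this] show "(b, a) \<in> edges G'" unfolding edges_G'_iff by blast
qed

lemma edges_G'_subset: "edges G' \<subseteq> verts G' \<times> verts G'"
proof
  fix e assume "e \<in> edges G'"
  then obtain a b where e: "e = (a, b)" "(a, b) \<in> edges G'" by (cases e) auto
  then obtain v p where "v \<in> verts G" "(a, b, p) \<in> oedges (Out v)" unfolding edges_G'_iff by blast
  from oedges_Out_ok[OF this] this(1) show "e \<in> verts G' \<times> verts G'"
    unfolding e by (auto simp: verts_G'_iff)
qed

lemma irrefl_G': "irrefl (edges G')"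
  unfolding irrefl_def
proof
  fix z show "(z, z) \<notin> edges G'"
    by (rule vertex_kind_cases[of z])
      (use G_graph(4) G1_graph(2) G2_graph(2) in \<open>auto simp: irrefl_def\<close>)
qed

lemma hub_reach: "(v, w) \<in> (edges G)\<^sup>* \<Longrightarrow> (hub v, hub w) \<in> (edges G')\<^sup>*"
proof (induction rule: rtrancl_induct)
  case base then show ?case by simp
next
  case (step y z)
  then have "y \<in> verts G" using G_graph(2) by blast
  with step have "(hub y, hub z) \<in> edges G'" by simp
  with step show ?case by (meson rtrancl.rtrancl_into_rtrancl)
qed

lemma reach_hub: "z \<in> verts G' \<Longrightarrow> \<exists>v\<in>verts G. (z, hub v) \<in> (edges G')\<^sup>* \<and> (hub v, z) \<in> (edges G')\<^sup>*"
proof -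
  assume "z \<in> verts G'"
  then obtain v where v: "v \<in> verts G" "z \<in> hosted (Out v)" unfolding verts_G'_iff by blast
  have "z = hub v \<or> ((z, hub v) \<in> edges G' \<and> (hub v, z) \<in> edges G')"
    by (rule hosted_cases[OF v]) (use v in auto)
  then show ?thesis using v by blast
qed

lemma connected_G': "\<forall>a\<in>verts G'. \<forall>b\<in>verts G'. (a, b) \<in> (edges G')\<^sup>*"
proof (intro ballI)
  fix a b assume "a \<in> verts G'" "b \<in> verts G'"
  from reach_hub[OF this(1)] reach_hub[OF this(2)] obtain v w where
    "v \<in> verts G" "w \<in> verts G" "(a, hub v) \<in> (edges G')\<^sup>*" "(hub w, b) \<in> (edges G')\<^sup>*" by blast
  moreover have "(hub v, hub w) \<in> (edges G')\<^sup>*" using hub_reach G_graph(5) calculation(1,2) by blast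
  ultimately show "(a, b) \<in> (edges G')\<^sup>*" by (meson rtrancl_trans)
qed

lemma verts_G'_sub: "verts G' \<subseteq> hub ` verts G \<union> (\<lambda>(x, j). copy1 x j) ` (verts G1 \<times> {..<k2})
                                  \<union> (\<lambda>(x, i). copy2 x i) ` (verts G2 \<times> {..<k1})"
proof
  fix z assume z: "z \<in> verts G'"
  show "z \<in> hub ` verts G \<union> (\<lambda>(x, j). copy1 x j) ` (verts G1 \<times> {..<k2}) \<union> (\<lambda>(x, i). copy2 x i) ` (verts G2 \<times> {..<k1})"
    by (rule vertex_kind_cases[of z]) (use z in force)+
qed

lemma finite_G': "finite (verts G')"
  by (rule finite_subset[OF verts_G'_sub]) (use G_graph(1) G1_graph(1) G2_graph(1) in auto)

lemma card_G': "card (verts G') \<le> card (verts G) + card (verts G1) * k2 + card (verts G2) * k1"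
proof -
  have "card (verts G') \<le> card (hub ` verts G \<union> (\<lambda>(x, j). copy1 x j) ` (verts G1 \<times> {..<k2})
                                  \<union> (\<lambda>(x, i). copy2 x i) ` (verts G2 \<times> {..<k1}))"
    by (rule card_mono[OF _ verts_G'_sub]) (use G_graph(1) G1_graph(1) G2_graph(1) in auto)
  also have "\<dots> \<le> card (hub ` verts G) + card ((\<lambda>(x, j). copy1 x j) ` (verts G1 \<times> {..<k2}))
                  + card ((\<lambda>(x, i). copy2 x i) ` (verts G2 \<times> {..<k1}))"
    by (meson add_le_mono card_Un_le le_refl order_trans)
  also have "\<dots> \<le> card (verts G) + card (verts G1 \<times> {..<k2}) + card (verts G2 \<times> {..<k1})"
    by (intro add_le_mono card_image_le) (use G_graph(1) G1_graph(1) G2_graph(1) in auto)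
  finally show ?thesis by (simp add: card_cartesian_product)
qed

lemma unary_G'_iff: "c < k1 * k2 \<Longrightarrow> z \<in> unary G' ! c \<longleftrightarrow> (\<exists>v\<in>verts G. (z, c) \<in> ulabs (Out v))"
  using unary_assemble[of c G Out] root_Out unfolding G'_def by simp

lemma length_unary_G': "length (unary G') = k1 * k2"
  using length_unary_assemble[of G Out] root_Out unfolding G'_def by simp

lemma binary_G': "binary G' = [edges G']"
proof -
  have "blabs (Out v) = {(0, x, y) | x y p. (x, y, p) \<in> oedges (Out v)}" for v
    by (simp add: Out_def or_output_def)
  then show ?thesis using binary_assemble[of G Out] root_Out unfolding G'_def
    by (auto simp: edges_assemble)
qed

lemma colour_unique1: "i < k1 \<Longrightarrow> i' < k1 \<Longrightarrow> x \<in> unary G1 ! i \<Longrightarrow> x \<in> unary G1 ! i' \<Longrightarrow> i = i'"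
  using inst1 unfolding inst_MIS_def by blast
lemma colour_unique2: "i < k2 \<Longrightarrow> i' < k2 \<Longrightarrow> x \<in> unary G2 ! i \<Longrightarrow> x \<in> unary G2 ! i' \<Longrightarrow> i = i'"
  using inst2 unfolding inst_MIS_def by blast

lemma colours_disjoint_G':
  assumes c: "c < k1 * k2" "c' < k1 * k2" "c \<noteq> c'"
  shows "unary G' ! c \<inter> unary G' ! c' = {}"
proof (rule ccontr)
  assume "unary G' ! c \<inter> unary G' ! c' \<noteq> {}"
  then obtain z where z: "z \<in> unary G' ! c" "z \<in> unary G' ! c'" by blast
  show False
  proof (rule vertex_kind_cases[of z])
    fix v assume "z = hub v" then show False using z unary_G'(1)[OF c(1)] by simp
  next
    fix x j assume "z = copy1 x j"
    then show False using z unary_G'(2)[OF c(1)] unary_G'(2)[OF c(2)] colour_unique1 c(3) by auto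
  next
    fix x j assume "z = copy2 x j"
    then show False using z unary_G'(3)[OF c(1)] unary_G'(3)[OF c(2)] colour_unique2 c(3) by auto
  qed
qed

lemma inst_G': "inst_MIS G' (k1 * k2)"
proof -
  obtain v0 where v0: "v0 \<in> verts G" using verts_G_nonempty by blast
  have cgr: "connected_graph (verts G') (edges G')"
    unfolding connected_graph_def using finite_G' edges_G'_subset sym_G' irrefl_G' connected_G' v0
    by (metis empty_iff verts_G'(1))
  have un: "\<forall>P\<in>set (unary G'). P \<subseteq> verts G'"
  proof
    fix P assume "P \<in> set (unary G')"
    then obtain c where c: "c < k1 * k2" "P = unary G' ! c" using length_unary_G' by (metis in_set_conv_nth)
    show "P \<subseteq> verts G'" using ulabs_Out_ok unfolding c(2) by (auto simp: unary_G'_iff[OF c(1)] verts_G'_iff) blast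
  qed
  have "1 \<le> k1 * k2" using k1_pos k2_pos by simp
  then show ?thesis unfolding inst_MIS_def in_G_def
    using cgr un length_unary_G' binary_G' edges_G'_subset colours_disjoint_G' by auto
qed

lemma two_le_card_verts: "2 \<le> card (verts G)"
proof -
  obtain v where v: "v \<in> verts G" using verts_G_nonempty by blast
  then obtain w where "(v, w) \<in> edges G" using no_isolated unfolding nbrs_def by blast
  then have "w \<in> verts G" "v \<noteq> w" using G_graph(2,4) unfolding irrefl_def by auto
  then have "{v, w} \<subseteq> verts G" "card {v, w} = 2" using v by auto
  then show ?thesis by (metis card_mono G_graph(1))
qed

lemma red_output_ok_Out:
  "red_output_ok G Out (Suc (Suc (s1 + s2 + p1 + p2))) (Suc (r1 + r2)) (Suc (p1 * p2)) inst_MIS"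
proof -
  have card: "card (verts G') \<le> card (verts G) ^ (Suc (Suc (s1 + s2 + p1 + p2)))"
  proof -
    have "card (verts G') \<le> card (verts G) + card (verts G1) * k2 + card (verts G2) * k1" by (rule card_G')
    also have "\<dots> \<le> card (verts G) ^ (Suc (Suc (s1 + s2 + p1 + p2)))"
      by (rule sum_le_power[OF two_le_card_verts])
        (use red_output_ok_card[OF ok1] red_output_ok_card[OF ok2]
          red_output_ok_bound[OF ok1] red_output_ok_bound[OF ok2] in \<open>simp_all add: G1_def G2_def k1_def k2_def\<close>)
    finally show ?thesis .
  qed
  have kp: "k1 * k2 \<le> Suc (p1 * p2)"
    using red_output_ok_bound[OF ok1] red_output_ok_bound[OF ok2] unfolding k1_def[symmetric] k2_def[symmetric]
    by (simp add: le_SucI mult_le_mono)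
  have bl: "\<forall>v\<in>verts G. \<forall>(i, x, y) \<in> blabs (Out v). x \<in> hosted (Out v) \<and> y \<in> verts G' \<and> i < 1"
  proof (intro ballI, clarify)
    fix v i x y assume v: "v \<in> verts G" and b: "(i, x, y) \<in> blabs (Out v)"
    have "blabs (Out v) = {(0, x, y) | x y p. (x, y, p) \<in> oedges (Out v)}"
      by (simp add: Out_def or_output_def)
    with b obtain p where "i = 0" "(x, y, p) \<in> oedges (Out v)" by auto
    with oedges_Out_ok[OF v this(2)] v show "x \<in> hosted (Out v) \<and> y \<in> verts G' \<and> i < 1"
      by (auto simp: verts_G'_iff)
  qed
  show ?thesis unfolding red_output_ok_def Let_def G'_def[symmetric] root_Out
    using out_counts_Out hosted_Out_disjoint ulabs_Out_ok oedges_Out_ok card kp inst_G' bl by auto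
qed

lemma colour_class_G':
  assumes "i < k1" "j < k2" "z \<in> unary G' ! (i * k2 + j)"
  shows "(\<exists>x. z = copy1 x j \<and> x \<in> unary G1 ! i) \<or> (\<exists>y. z = copy2 y i \<and> y \<in> unary G2 ! j)"
proof -
  have c: "i * k2 + j < k1 * k2" using pair_index_less assms(1,2) .
  show ?thesis
  proof (rule vertex_kind_cases[of z])
    fix v assume "z = hub v" then show ?thesis using assms(3) unary_G'(1)[OF c] by simp
  next
    fix x j' assume z: "z = copy1 x j'"
    then obtain i' where "j' < k2" "i' < k1" "i * k2 + j = i' * k2 + j'" "x \<in> unary G1 ! i'"
      using assms(3) unary_G'(2)[OF c] by auto
    then show ?thesis using z pair_index_inj assms(2) by metis
  next
    fix x i' assume z: "z = copy2 x i'"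
    then obtain j' where "i' < k1" "j' < k2" "i * k2 + j = i' * k2 + j'" "x \<in> unary G2 ! j'"
      using assms(3) unary_G'(3)[OF c] by auto
    then show ?thesis using z pair_index_inj assms(2) by metis
  qed
qed

lemma MIS_G'_if_MIS_G1:
  assumes "(G1, k1) \<in> MIS"
  shows "(G', k1 * k2) \<in> MIS"
proof -
  obtain f where f: "\<forall>i<k1. f i \<in> unary G1 ! i" "\<forall>i<k1. \<forall>j<k1. i \<noteq> j \<longrightarrow> (f i, f j) \<notin> edges G1"
    using assms unfolding MIS_def by blast
  define F where "F c = copy1 (f (c div k2)) (c mod k2)" for c
  have "F c \<in> unary G' ! c" if c: "c < k1 * k2" for c
    unfolding F_def unary_G'(2)[OF c] using pair_index_split[OF c] f(1) by metis
  moreover have "(F c, F c') \<notin> edges G'" if c: "c < k1 * k2" "c' < k1 * k2" "c \<noteq> c'" for c c'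
  proof (cases "c div k2 = c' div k2")
    case True then show ?thesis using G1_graph(2) unfolding F_def irrefl_def by simp
  next
    case False
    then show ?thesis
      using f(2) pair_index_split[OF c(1)] pair_index_split[OF c(2)] unfolding F_def by simp
  qed
  ultimately show ?thesis unfolding MIS_def using inst_G' by blast
qed

lemma MIS_G'_if_MIS_G2:
  assumes "(G2, k2) \<in> MIS"
  shows "(G', k1 * k2) \<in> MIS"
proof -
  obtain g where g: "\<forall>j<k2. g j \<in> unary G2 ! j" "\<forall>j<k2. \<forall>j'<k2. j \<noteq> j' \<longrightarrow> (g j, g j') \<notin> edges G2"
    using assms unfolding MIS_def by blast
  define F where "F c = copy2 (g (c mod k2)) (c div k2)" for c
  have "F c \<in> unary G' ! c" if c: "c < k1 * k2" for c
    unfolding F_def unary_G'(3)[OF c] using pair_index_split[OF c] g(1) by metis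
  moreover have "(F c, F c') \<notin> edges G'" if c: "c < k1 * k2" "c' < k1 * k2" "c \<noteq> c'" for c c'
  proof (cases "c mod k2 = c' mod k2")
    case True then show ?thesis using G2_graph(2) unfolding F_def irrefl_def by simp
  next
    case False
    then show ?thesis
      using g(2) pair_index_split[OF c(1)] pair_index_split[OF c(2)] unfolding F_def by simp
  qed
  ultimately show ?thesis unfolding MIS_def using inst_G' by blast
qed

lemma MIS_G1_or_MIS_G2_if_MIS_G':
  assumes "(G', k1 * k2) \<in> MIS"
  shows "(G1, k1) \<in> MIS \<or> (G2, k2) \<in> MIS"
proof -
  obtain F where F: "\<forall>c<k1 * k2. F c \<in> unary G' ! c"
      "\<forall>c<k1 * k2. \<forall>c'<k1 * k2. c \<noteq> c' \<longrightarrow> (F c, F c') \<notin> edges G'"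
    using assms unfolding MIS_def by blast
  have F_colour: "(\<exists>x. F (i * k2 + j) = copy1 x j \<and> x \<in> unary G1 ! i)
      \<or> (\<exists>y. F (i * k2 + j) = copy2 y i \<and> y \<in> unary G2 ! j)" if "i < k1" "j < k2" for i j
    using colour_class_G' that F(1) pair_index_less[OF that] by blast
  show ?thesis
  proof (cases "\<forall>i<k1. \<exists>j<k2. \<exists>x. F (i * k2 + j) = copy1 x j \<and> x \<in> unary G1 ! i")
    case True
    then obtain J where J: "\<forall>i<k1. J i < k2
                  \<and> F (i * k2 + J i) = copy1 (copy_orig (F (i * k2 + J i))) (J i)
                  \<and> copy_orig (F (i * k2 + J i)) \<in> unary G1 ! i"
      by (metis copy_orig_simps(1))
    define f where "f i = copy_orig (F (i * k2 + J i))" for i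
    have "(f i, f i') \<notin> edges G1" if i: "i < k1" "i' < k1" "i \<noteq> i'" for i i'
    proof -
      have "i * k2 + J i \<noteq> i' * k2 + J i'" using pair_index_inj J i by metis
      then have "(F (i * k2 + J i), F (i' * k2 + J i')) \<notin> edges G'"
        using F(2) pair_index_less J i by metis
      then show ?thesis using J i unfolding f_def by (metis edges_G'(1))
    qed
    then have "(G1, k1) \<in> MIS" unfolding MIS_def using inst1 J f_def by auto
    then show ?thesis ..
  next
    case False
    then obtain i where i: "i < k1" "\<forall>j<k2. \<not> (\<exists>x. F (i * k2 + j) = copy1 x j \<and> x \<in> unary G1 ! i)"
      by blast
    then have S: "\<forall>j<k2. F (i * k2 + j) = copy2 (copy_orig (F (i * k2 + j))) i
                  \<and> copy_orig (F (i * k2 + j)) \<in> unary G2 ! j"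
      using F_colour by (metis copy_orig_simps(2))
    define g where "g j = copy_orig (F (i * k2 + j))" for j
    have "(g j, g j') \<notin> edges G2" if j: "j < k2" "j' < k2" "j \<noteq> j'" for j j'
    proof -
      have "(F (i * k2 + j), F (i * k2 + j')) \<notin> edges G'"
        using F(2) pair_index_less[OF i(1)] j by simp
      then show ?thesis using S j i unfolding g_def by (metis edges_G'(2))
    qed
    then have "(G2, k2) \<in> MIS" unfolding MIS_def using inst2 S g_def by auto
    then show ?thesis ..
  qed
qed

lemma MIS_G'_iff: "(G', k1 * k2) \<in> MIS \<longleftrightarrow> (G1, k1) \<in> MIS \<or> (G2, k2) \<in> MIS"
  using MIS_G'_if_MIS_G1 MIS_G'_if_MIS_G2 MIS_G1_or_MIS_G2_if_MIS_G' by blast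

end

section \<open>The composed reduction\<close>

text \<open>A node without neighbours is the whole network, so it can assemble the two instances from
  its own outputs alone and solve them.\<close>

definition singleton_graph :: "nat \<Rightarrow> lgraph" where
  "singleton_graph v = \<lparr> verts = {v}, edges = {}, unary = [], binary = [] \<rparr>"

definition decided_output :: "nat \<Rightarrow> bool \<Rightarrow> nodeout" where
  "decided_output v b = \<lparr> out_k = 1, out_ns = 1, out_nt = 1, hosted = {v},
     ulabs = (if b then {(v, 0)} else {}), oedges = {}, blabs = {} \<rparr>"

definition or_outputs :: "lgraph \<Rightarrow> (nat \<Rightarrow> nodeout) \<Rightarrow> (nat \<Rightarrow> nodeout) \<Rightarrow> nat \<Rightarrow> nodeout" where
  "or_outputs G O1 O2 v = (if nbrs G v = {}
     then decided_output v ((assemble (singleton_graph v) (\<lambda>_. O1 v), out_k (O1 v)) \<in> MIS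
                           \<or> (assemble (singleton_graph v) (\<lambda>_. O2 v), out_k (O2 v)) \<in> MIS)
     else or_output (O1 v) (O2 v) v (nbrs G v))"

lemma or_outputs_local:
  "O1 v = O1' v \<Longrightarrow> O2 v = O2' v \<Longrightarrow> nbrs G v = nbrs G' v \<Longrightarrow>
    or_outputs G O1 O2 v = or_outputs G' O1' O2' v"
  by (simp add: or_outputs_def)

lemma decided_output_ok:
  assumes V: "verts G = {v}" and O: "Ou v = decided_output v b" and p: "1 \<le> p"
  shows "red_output_ok G Ou sz r p inst_MIS"
    and "(assemble G Ou, out_k (out_root G Ou)) \<in> MIS \<longleftrightarrow> b"
proof -
  have R: "out_root G Ou = decided_output v b" unfolding out_root_def V using O by simp
  have A: "assemble G Ou = \<lparr> verts = {v}, edges = {}, unary = [if b then {v} else {}], binary = [{}] \<rparr>"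
    unfolding assemble_def R V using O by (auto simp: decided_output_def)
  have "connected_graph {v} {}" unfolding connected_graph_def by (simp add: sym_def irrefl_def)
  then have I: "inst_MIS (assemble G Ou) 1" unfolding A inst_MIS_def in_G_def by auto
  show "red_output_ok G Ou sz r p inst_MIS"
    unfolding red_output_ok_def Let_def R using I A O V p by (auto simp: decided_output_def)
  show "(assemble G Ou, out_k (out_root G Ou)) \<in> MIS \<longleftrightarrow> b"
    unfolding R using I unfolding MIS_def by (auto simp: decided_output_def A)
qed

lemma or_outputs_correct:
  assumes G: "connected_graph (verts G) (edges G)"
    and ok1: "red_output_ok G O1 s1 r1 p1 inst_MIS" and ok2: "red_output_ok G O2 s2 r2 p2 inst_MIS"
  defines "Comb \<equiv> or_outputs G O1 O2"
  shows "red_output_ok G Comb (Suc (Suc (s1 + s2 + p1 + p2))) (Suc (r1 + r2)) (Suc (p1 * p2)) inst_MIS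
    \<and> ((assemble G Comb, out_k (out_root G Comb)) \<in> MIS \<longleftrightarrow>
       (assemble G O1, out_k (out_root G O1)) \<in> MIS \<or> (assemble G O2, out_k (out_root G O2)) \<in> MIS)"
proof (cases "\<exists>v\<in>verts G. nbrs G v = {}")
  case True
  then obtain v where v: "v \<in> verts G" "nbrs G v = {}" by blast
  have V: "verts G = {v}" by (rule connected_graph_isolated[OF G v])
  have root: "out_root H Ou = Ou v" if "verts H = {v}" for H Ou
    using that unfolding out_root_def by simp
  have "assemble G Ou = assemble (singleton_graph v) (\<lambda>_. Ou v)" for Ou
    unfolding assemble_def using root[OF V] root[of "singleton_graph v"] V
    by (simp add: singleton_graph_def)
  then have "Comb v = decided_output v ((assemble G O1, out_k (out_root G O1)) \<in> MIS
                                     \<or> (assemble G O2, out_k (out_root G O2)) \<in> MIS)"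
    unfolding Comb_def or_outputs_def root[OF V] using v by simp
  from decided_output_ok[where Ou=Comb and p="Suc (p1 * p2)", OF V this] show ?thesis by simp
next
  case False
  then interpret or_composition G O1 O2 s1 r1 p1 s2 r2 p2
    using ok1 ok2 G by unfold_locales auto
  have eq: "\<forall>v\<in>verts G. or_outputs G O1 O2 v = or_composition.Out G O1 O2 v"
    using False by (simp add: or_outputs_def Out_def)
  have "red_output_ok G Comb (Suc (Suc (s1 + s2 + p1 + p2))) (Suc (r1 + r2)) (Suc (p1 * p2)) inst_MIS"
    using red_output_ok_Out red_output_ok_cong[OF verts_G_nonempty eq] unfolding Comb_def by simp
  moreover have "assemble G Comb = G'"
    unfolding G'_def Comb_def using assemble_cong[OF verts_G_nonempty eq] by simp
  moreover have "out_k (out_root G Comb) = k1 * k2"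
    using out_root_cong[OF verts_G_nonempty eq] root_Out unfolding Comb_def by simp
  ultimately show ?thesis using MIS_G'_iff unfolding G1_def G2_def k1_def k2_def by simp
qed

theorem mainTheorem12:
  fixes s t :: nat and P1 P2 :: problem
  assumes "P1 \<subseteq> {(G, k). in_G s t G}"
      and "P2 \<subseteq> {(G, k). in_G s t G}"
      and "local_reduction s t P1 inst_MIS MIS"
      and "local_reduction s t P2 inst_MIS MIS"
  shows "local_reduction s t (P1 \<union> P2) inst_MIS MIS"
proof -
  obtain sz1 r1 rd1 p1 A1 where c1: "computable sz1" "computable r1" "computable rd1" "computable p1"
    and local1: "\<And>G1 G2 k v. in_G s t G1 \<Longrightarrow> in_G s t G2 \<Longrightarrow> v \<in> verts G1 \<Longrightarrow>
                   same_view G1 G2 v (rd1 k) \<Longrightarrow> A1 G1 k v = A1 G2 k v"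
    and ok1: "\<And>G k. in_G s t G \<Longrightarrow> red_output_ok G (A1 G k) (sz1 k) (r1 k) (p1 k) inst_MIS"
    and iff1: "\<And>G k. in_G s t G \<Longrightarrow>
                 (G, k) \<in> P1 \<longleftrightarrow> (assemble G (A1 G k), out_k (out_root G (A1 G k))) \<in> MIS"
    using assms(3) by (rule local_reductionE) (rule that)
  obtain sz2 r2 rd2 p2 A2 where c2: "computable sz2" "computable r2" "computable rd2" "computable p2"
    and local2: "\<And>G1 G2 k v. in_G s t G1 \<Longrightarrow> in_G s t G2 \<Longrightarrow> v \<in> verts G1 \<Longrightarrow>
                   same_view G1 G2 v (rd2 k) \<Longrightarrow> A2 G1 k v = A2 G2 k v"
    and ok2: "\<And>G k. in_G s t G \<Longrightarrow> red_output_ok G (A2 G k) (sz2 k) (r2 k) (p2 k) inst_MIS"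
    and iff2: "\<And>G k. in_G s t G \<Longrightarrow>
                 (G, k) \<in> P2 \<longleftrightarrow> (assemble G (A2 G k), out_k (out_root G (A2 G k))) \<in> MIS"
    using assms(4) by (rule local_reductionE) (rule that)
  have correct: "red_output_ok G (or_outputs G (A1 G k) (A2 G k))
        (Suc (Suc (sz1 k + sz2 k + p1 k + p2 k))) (Suc (r1 k + r2 k)) (Suc (p1 k * p2 k)) inst_MIS
      \<and> ((G, k) \<in> P1 \<union> P2 \<longleftrightarrow> (assemble G (or_outputs G (A1 G k) (A2 G k)),
                                  out_k (out_root G (or_outputs G (A1 G k) (A2 G k)))) \<in> MIS)"
    if G: "in_G s t G" for G k
    using or_outputs_correct[OF _ ok1[OF G] ok2[OF G]] G iff1[OF G] iff2[OF G]
    unfolding in_G_def by (simp add: add.assoc)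
  note computable_rules = computable_Suc computable_add computable_mult c1 c2
  show ?thesis
  proof (rule local_reductionI[where A = "\<lambda>G k. or_outputs G (A1 G k) (A2 G k)"
        and sz = "\<lambda>k. Suc (Suc (sz1 k + sz2 k + p1 k + p2 k))" and r = "\<lambda>k. Suc (r1 k + r2 k)"
        and rd = "\<lambda>k. rd1 k + rd2 k" and p = "\<lambda>k. Suc (p1 k * p2 k)"])
    show "computable (\<lambda>k. Suc (Suc (sz1 k + sz2 k + p1 k + p2 k)))" "computable (\<lambda>k. Suc (r1 k + r2 k))"
      "computable (\<lambda>k. rd1 k + rd2 k)" "computable (\<lambda>k. Suc (p1 k * p2 k))"
      by (intro computable_rules)+
    show "or_outputs G1 (A1 G1 k) (A2 G1 k) v = or_outputs G2 (A1 G2 k) (A2 G2 k) v"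
      if "in_G s t G1" "in_G s t G2" "v \<in> verts G1" and view: "same_view G1 G2 v (rd1 k + rd2 k)"
      for G1 G2 k v
      using that local1 local2 same_view_mono[OF view] same_view_nbrs[OF view]
      by (intro or_outputs_local) auto
    show "red_output_ok G (or_outputs G (A1 G k) (A2 G k))
        (Suc (Suc (sz1 k + sz2 k + p1 k + p2 k))) (Suc (r1 k + r2 k)) (Suc (p1 k * p2 k)) inst_MIS"
      if "in_G s t G" for G k
      using correct[OF that] by (rule conjunct1)
    show "(G, k) \<in> P1 \<union> P2 \<longleftrightarrow> (assemble G (or_outputs G (A1 G k) (A2 G k)),
                                  out_k (out_root G (or_outputs G (A1 G k) (A2 G k)))) \<in> MIS"
      if "in_G s t G" for G k
      using correct[OF that] by (rule conjunct2)
  qed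
qed

end
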